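(* Let $A=(A[1],\dots,A[n])$ be an array of $n$ pairwise distinct real numbers and let $G$ be the corresponding graph of $A$ with reach one. Let $F$ be the resulting DFS forest of $G$ (for a visiting list that is some ordering of all vertices). Merge the sub-trees of $F$ and call the resulting graph $H'$. Let $H_1$ and $R_1$ be the graph and the root list produced by the merge step applied to $H'$ with the list of roots of $F$ (in some order), and let $F_1$ be the resulting DFS forest of $H_1$ with visiting list $R_1$. For $i>1$, let $H_i$ and $R_i$ be the graph and root list produced by the merge step applied to $F_{i-1}$ with root list $R_{i-1}$, and let $F_i$ be the resulting DFS forest of $H_i$ with visiting list $R_i$. Then there exists a finite $i$ such that $F_i$ is a directed Hamiltonian path on all $n$ vertices, and the topological sort of $F_i$ is the sequence of indices of the sorted array of $A$.
   Context: An array is a finite sequence $A=(A[1],\dots,A[n])$ of pairwise distinct real numbers. A comparison graph on $A$ is a directed graph with vertex set $\{1,\dots,n\}$ in which every arc $(u,v)$ satisfies $A[u]<A[v]$. The corresponding graph of $A$ with reach $r\ge1$ is the directed graph on $\{1,\dots,n\}$ having an arc $(i,j)$ for every $i\neq j$ with $A[i]<A[j]$ such that $j\equiv i+k$ or $j\equiv i-k \pmod n$ for some $1\le k\le r$ (indices cyclic). Components of a directed graph are the connected components of its underlying undirected graph. A directed Hamiltonian path of a graph (or of a component) is a directed path visiting each of its vertices exactly once. A topological sort of a directed acyclic graph is an ordering of all vertices such that every arc goes from an earlier to a later vertex. The sequence of indices of the sorted array of $A$ is the permutation $(\sigma_1,\dots,\sigma_n)$ of $\{1,\dots,n\}$ with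 $A[\sigma_1]<\dots<A[\sigma_n]$. DFS: adjacency lists are sorted in increasing order of $A$-value; given a visiting list $(l_1,\dots,l_m)$, for $t=1,\dots,m$, if $l_t$ is unvisited call Visit$(l_t)$, where Visit$(u)$ marks $u$ visited and, for each out-neighbour $w$ of $u$ in increasing order of $A[w]$ that is still unvisited, sets parent$(w)=u$ and calls Visit$(w)$. The resulting DFS forest is the directed graph on the same vertex set with arcs $(\mathrm{parent}(w),w)$; its roots are the vertices without parent. Merging the sub-trees of a DFS forest $F$ of the reach-one corresponding graph: for each component of $F$ whose root has exactly two children $a_1,b_1$, set $p=a_1$, $q=b_1$ and, while both $p,q$ are defined: if $A[p]<A[q]$ add the arc $(p,q)$ and replace $p$ by its smallest-valued child in $F$ (undefined if none); otherwise add the arc $(q,p)$ and replace $q$ by its smallest-valued child in $F$ (undefined if none). Component merge of two distinct components $C,D$ of a comparison graph: set $p,q$ to the minimum-valued vertices of $C,D$; while both are defined: if $A[p]<A[q]$ add the arc $(p,q)$ and replace $p$ by the smallest-valued out-neighbour of $p$ in $C$ (ignoring arcs added during this merge; undefined if none); otherwise add $(q,p)$ and replace $q$ analogously within $D$. Merge step: given a comparison graph whose components each have a minimum-valued vertex (its root) and a list $(\rho_1,\dots,\rho_k)$ of these roots, perform the component merge of the components of $\rho_{2j-1}$ and $\rho_{2j}$ for $j=1,\dots,\lfloor k/2\rfloor$, and return the new root list obtained from $(\rho_1,\dots,\rho_k)$ by deleting, from each merged pair, the root of larger value. *)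

theory Defs
  imports Complex_Main
begin

text \<open>Vertices (array indices) are the naturals 1..n; an array is a function
  A :: nat => real that is injective on {1..n}.\<close>

type_synonym graph = "(nat \<times> nat) set"

definition corr_graph :: "nat \<Rightarrow> nat \<Rightarrow> (nat \<Rightarrow> real) \<Rightarrow> graph" where
  "corr_graph n r A = {(i, j). i \<in> {1..n} \<and> j \<in> {1..n} \<and> i \<noteq> j \<and> A i < A j \<and>
      (\<exists>k\<in>{1..r}. j mod n = (i + k) mod n \<or> i mod n = (j + k) mod n)}"

definition by_value :: "nat \<Rightarrow> (nat \<Rightarrow> real) \<Rightarrow> nat list" where
  "by_value n A = sort_key A [1..<Suc n]"

definition out_sorted :: "nat \<Rightarrow> graph \<Rightarrow> (nat \<Rightarrow> real) \<Rightarrow> nat \<Rightarrow> nat list" where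
  "out_sorted n G A u = filter (\<lambda>w. (u, w) \<in> G) (by_value n A)"

definition first_out :: "nat \<Rightarrow> graph \<Rightarrow> (nat \<Rightarrow> real) \<Rightarrow> nat set \<Rightarrow> nat \<Rightarrow> nat option" where
  "first_out n G A S p =
     (case filter (\<lambda>w. (p, w) \<in> G \<and> w \<in> S) (by_value n A) of [] \<Rightarrow> None | w # _ \<Rightarrow> Some w)"

text \<open>The first argument is a
  recursion-depth bound (fuel); it is instantiated with n+1, which is never exhausted
  because every nested call of Visit is on a fresh unvisited vertex of {1..n}.\<close>

type_synonym dfs_state = "nat set \<times> (nat \<Rightarrow> nat option)"

function visit :: "nat \<Rightarrow> nat \<Rightarrow> graph \<Rightarrow> (nat \<Rightarrow> real) \<Rightarrow> nat \<Rightarrow> dfs_state \<Rightarrow> dfs_state"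
  and visit_list :: "nat \<Rightarrow> nat \<Rightarrow> graph \<Rightarrow> (nat \<Rightarrow> real) \<Rightarrow> nat \<Rightarrow> nat list \<Rightarrow> dfs_state \<Rightarrow> dfs_state"
where
  "visit 0 n G A u st = st"
| "visit (Suc k) n G A u (vis, par) = visit_list k n G A u (out_sorted n G A u) (insert u vis, par)"
| "visit_list k n G A u [] st = st"
| "visit_list k n G A u (w # ws) (vis, par) =
     (if w \<in> vis then visit_list k n G A u ws (vis, par)
      else visit_list k n G A u ws (visit k n G A w (vis, par(w := Some u))))"
  by pat_completeness auto
termination
  by (relation "measures [\<lambda>x. case x of Inl (k, _) \<Rightarrow> k | Inr (k, _) \<Rightarrow> k,
                          \<lambda>x. case x of Inl _ \<Rightarrow> 0 | Inr (_, _, _, _, _, ws, _) \<Rightarrow> Suc (length ws)]") auto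

fun dfs_run :: "nat \<Rightarrow> graph \<Rightarrow> (nat \<Rightarrow> real) \<Rightarrow> nat list \<Rightarrow> dfs_state \<Rightarrow> dfs_state" where
  "dfs_run n G A [] st = st"
| "dfs_run n G A (l # ls) (vis, par) =
     (if l \<in> vis then dfs_run n G A ls (vis, par)
      else dfs_run n G A ls (visit (Suc n) n G A l (vis, par)))"

definition dfs_forest :: "nat \<Rightarrow> graph \<Rightarrow> (nat \<Rightarrow> real) \<Rightarrow> nat list \<Rightarrow> graph" where
  "dfs_forest n G A ls = {(u, w). snd (dfs_run n G A ls ({}, \<lambda>_. None)) w = Some u}"

definition roots :: "nat \<Rightarrow> graph \<Rightarrow> nat set" where
  "roots n F = {v \<in> {1..n}. \<forall>u. (u, v) \<notin> F}"

text \<open>zipm k A nx ny p q: the arcs added by the loop "while both p,q defined: if A p < A q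
  add (p,q) and p := nx p, else add (q,p) and q := ny q". The fuel k = 2n+2 is never
  exhausted, since both pointers move along strictly A-increasing chains in {1..n}.\<close>
fun zipm :: "nat \<Rightarrow> (nat \<Rightarrow> real) \<Rightarrow> (nat \<Rightarrow> nat option) \<Rightarrow> (nat \<Rightarrow> nat option)
              \<Rightarrow> nat option \<Rightarrow> nat option \<Rightarrow> graph" where
  "zipm (Suc k) A nx ny (Some p) (Some q) =
     (if A p < A q then insert (p, q) (zipm k A nx ny (nx p) (Some q))
      else insert (q, p) (zipm k A nx ny (Some p) (ny q)))"
| "zipm _ _ _ _ _ _ = {}"

definition merge_subtrees :: "nat \<Rightarrow> (nat \<Rightarrow> real) \<Rightarrow> graph \<Rightarrow> graph" where
  "merge_subtrees n A F = F \<union>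
     \<Union>{zipm (2 * n + 2) A (first_out n F A UNIV) (first_out n F A UNIV) (Some a) (Some b)
        | r a b. r \<in> roots n F \<and> a \<noteq> b \<and> {w. (r, w) \<in> F} = {a, b}}"

definition comp :: "nat \<Rightarrow> graph \<Rightarrow> nat \<Rightarrow> nat set" where
  "comp n G x = {y \<in> {1..n}. (x, y) \<in> (G \<union> G\<inverse>)\<^sup>*}"

definition comp_merge :: "nat \<Rightarrow> (nat \<Rightarrow> real) \<Rightarrow> graph \<Rightarrow> nat \<Rightarrow> nat \<Rightarrow> graph" where
  "comp_merge n A G x y =
     (let C = comp n G x; D = comp n G y in
      zipm (2 * n + 2) A (first_out n G A C) (first_out n G A D)
        (Some (arg_min_on A C)) (Some (arg_min_on A D)))"

fun mstep_arcs :: "nat \<Rightarrow> (nat \<Rightarrow> real) \<Rightarrow> graph \<Rightarrow> nat list \<Rightarrow> graph" where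
  "mstep_arcs n A G (a # b # rest) = comp_merge n A G a b \<union> mstep_arcs n A G rest"
| "mstep_arcs n A G _ = {}"

fun mstep_roots :: "(nat \<Rightarrow> real) \<Rightarrow> nat list \<Rightarrow> nat list" where
  "mstep_roots A (a # b # rest) = (if A a < A b then a else b) # mstep_roots A rest"
| "mstep_roots A xs = xs"

definition merge_step :: "nat \<Rightarrow> (nat \<Rightarrow> real) \<Rightarrow> graph \<Rightarrow> nat list \<Rightarrow> graph \<times> nat list" where
  "merge_step n A G R = (G \<union> mstep_arcs n A G R, mstep_roots A R)"

text \<open>One round: (F_{i-1}, R_{i-1}) to (F_i, R_i), with H_i the merged graph.\<close>
definition round_step :: "nat \<Rightarrow> (nat \<Rightarrow> real) \<Rightarrow> graph \<times> nat list \<Rightarrow> graph \<times> nat list" where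
  "round_step n A FR = (let (H, R) = merge_step n A (fst FR) (snd FR) in (dfs_forest n H A R, R))"

definition is_ham_path_graph :: "nat \<Rightarrow> graph \<Rightarrow> bool" where
  "is_ham_path_graph n G \<longleftrightarrow>
     (\<exists>p. distinct p \<and> set p = {1..n} \<and> G = set (zip p (tl p)))"

definition is_topsort :: "nat \<Rightarrow> graph \<Rightarrow> nat list \<Rightarrow> bool" where
  "is_topsort n G ord \<longleftrightarrow> distinct ord \<and> set ord = {1..n} \<and>
     (\<forall>(u, v) \<in> G. \<exists>i j. i < j \<and> j < length ord \<and> ord ! i = u \<and> ord ! j = v)"

definition is_sorted_indices :: "nat \<Rightarrow> (nat \<Rightarrow> real) \<Rightarrow> nat list \<Rightarrow> bool" where
  "is_sorted_indices n A \<sigma> \<longleftrightarrow> distinct \<sigma> \<and> set \<sigma> = {1..n} \<and> sorted_wrt (\<lambda>i j. A i < A j) \<sigma>"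

end

theory Submission
  imports Defs "HOL-Library.Multiset"
begin

text \<open>
  Partition the indices into blocks, each listed in increasing order of A, and call a graph
  a block graph if it contains the A-sorted path of every block and otherwise only arcs
  going up inside a block. In a block graph the components are the blocks, and a DFS
  started at the block minima always moves to the A-smallest out-neighbour, i.e. it walks
  every block along its sorted path. Merging two blocks with the two-pointer loop adds
  every arc between A-consecutive elements of different blocks, so after a merge step
  the graph is a block graph for the pairwise merged blocks, and the DFS forest is again
  the union of their sorted paths. Each round halves the number of blocks, so eventually
  a single block remains: the sorted array, whose path is Hamiltonian and has itself as
  its only topological sort.

  To start, every index has at most two neighbours on the cycle, so in the DFS forest of
  the reach-one graph only roots can have two children; every subtree is a path or two
  paths below the root, and merging the two sub-trees makes H' a block graph for the
  subtrees of the roots.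
\<close>

abbreviation ascending :: "('a \<Rightarrow> 'b::linorder) \<Rightarrow> 'a list \<Rightarrow> bool" where
  "ascending A xs \<equiv> sorted_wrt (\<lambda>x y. A x < A y) xs"

abbreviation path_arcs :: "'a list \<Rightarrow> 'a rel" where
  "path_arcs xs \<equiv> set (zip xs (tl xs))"

definition succ_in :: "('a \<Rightarrow> 'b::linorder) \<Rightarrow> 'a set \<Rightarrow> 'a \<Rightarrow> 'a \<Rightarrow> bool" where
  "succ_in A S u v \<longleftrightarrow> u \<in> S \<and> v \<in> S \<and> A u < A v \<and> \<not> (\<exists>z\<in>S. A u < A z \<and> A z < A v)"

lemma path_arcs_subset: "path_arcs xs \<subseteq> set xs \<times> set xs"
  by (cases xs) (auto dest: set_zip_leftD set_zip_rightD)

lemma ascending_distinct: "ascending A xs \<Longrightarrow> distinct xs"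
  by (induction xs) auto

lemma ascending_sort_key:
  "distinct xs \<Longrightarrow> inj_on A (set xs) \<Longrightarrow> ascending A (sort_key A xs)"
  by (simp add: sorted_wrt_map[symmetric] strict_sorted_iff distinct_map)

lemma ascending_hd_le: "ascending A xs \<Longrightarrow> y \<in> set xs \<Longrightarrow> A (hd xs) \<le> A y"
  by (cases xs) (auto simp: less_imp_le)

lemma ascending_last_ge: "ascending A xs \<Longrightarrow> y \<in> set xs \<Longrightarrow> A y \<le> A (last xs)"
  by (induction xs) (auto simp: less_imp_le)

lemma ascending_hd_eq:
  "ascending A xs \<Longrightarrow> x \<in> set xs \<Longrightarrow> \<forall>y\<in>set xs. A x \<le> A y \<Longrightarrow> hd xs = x"
  by (cases xs) (auto simp: not_less[symmetric])

lemma path_arcs_ascending_iff: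
  "ascending A xs \<Longrightarrow> (x, y) \<in> path_arcs xs \<longleftrightarrow> succ_in A (set xs) x y"
proof (induction xs rule: induct_list012)
  case (3 a b xs)
  then show ?case by (auto simp: succ_in_def)
qed (auto simp: succ_in_def)

section \<open>Smallest out-neighbours and the two-pointer merge\<close>

lemma by_value_set [simp]: "set (by_value n A) = {1..n}"
  by (simp only: by_value_def set_sort set_upt atLeastLessThanSuc_atLeastAtMost)

lemma by_value_ascending: "inj_on A {1..n} \<Longrightarrow> ascending A (by_value n A)"
  unfolding by_value_def
  by (intro ascending_sort_key) (simp_all del: upt_Suc add: atLeastLessThanSuc_atLeastAtMost)

lemma first_out_eq_SomeI:
  assumes "inj_on A {1..n}" "w \<in> {1..n}" "(p, w) \<in> G" "w \<in> S"
    and "\<And>w'. w' \<in> {1..n} \<Longrightarrow> (p, w') \<in> G \<Longrightarrow> w' \<in> S \<Longrightarrow> A w \<le> A w'"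
  shows "first_out n G A S p = Some w"
proof -
  let ?P = "\<lambda>w. (p, w) \<in> G \<and> w \<in> S"
  have asc: "ascending A (filter ?P (by_value n A))"
    by (rule sorted_wrt_filter, rule by_value_ascending, fact)
  have "hd (filter ?P (by_value n A)) = w"
    by (rule ascending_hd_eq[OF asc]) (use assms in auto)
  moreover have "filter ?P (by_value n A) \<noteq> []"
    using assms by (auto simp: filter_empty_conv)
  ultimately show ?thesis
    unfolding first_out_def by (auto split: list.split)
qed

lemma first_out_eq_NoneI:
  "(\<And>w. w \<in> {1..n} \<Longrightarrow> (p, w) \<in> G \<Longrightarrow> w \<notin> S) \<Longrightarrow> first_out n G A S p = None"
  unfolding first_out_def by (auto simp: filter_empty_conv split: list.split)

definition traverses :: "('a \<Rightarrow> 'a option) \<Rightarrow> 'a list \<Rightarrow> bool" where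
  "traverses nx xs \<longleftrightarrow> (\<forall>(x, y) \<in> path_arcs xs. nx x = Some y) \<and> nx (last xs) = None"

lemma traverses_first_out:
  assumes inj: "inj_on A {1..n}" and "L \<noteq> []" and asc: "ascending A L"
    and "set L \<subseteq> {1..n}" "set L \<subseteq> S" "path_arcs L \<subseteq> G"
    and out: "\<And>x w. x \<in> set L \<Longrightarrow> (x, w) \<in> G \<Longrightarrow> w \<in> S \<Longrightarrow> w \<in> set L \<and> A x < A w"
  shows "traverses (first_out n G A S) L"
  unfolding traverses_def
proof (intro conjI ballI first_out_eq_NoneI)
  fix xy assume xy: "xy \<in> path_arcs L"
  obtain x y where [simp]: "xy = (x, y)" by fastforce
  have succ: "succ_in A (set L) x y"
    using xy path_arcs_ascending_iff[OF asc] by simp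
  have "first_out n G A S x = Some y"
  proof (rule first_out_eq_SomeI[OF inj])
    show "y \<in> {1..n}" "(x, y) \<in> G" "y \<in> S"
      using succ xy assms(4-6) by (auto simp: succ_in_def)
    fix w assume "w \<in> {1..n}" "(x, w) \<in> G" "w \<in> S"
    then have "w \<in> set L" "A x < A w"
      using out[of x w] succ by (auto simp: succ_in_def)
    then show "A y \<le> A w"
      using succ by (auto simp: succ_in_def not_less)
  qed
  then show "case xy of (x, y) \<Rightarrow> first_out n G A S x = Some y" by simp
next
  fix w assume "(last L, w) \<in> G"
  then show "w \<notin> S"
    using out[of "last L" w] ascending_last_ge[OF asc, of w] \<open>L \<noteq> []\<close> by auto
qed

text \<open>The two-pointer loop only compares the current heads of the two lists, so it adds
  every arc between A-consecutive elements of different lists but possibly also other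
  increasing arcs (e.g. from each element of one list to the head of the other).\<close>

definition bridges :: "('a \<Rightarrow> 'b::linorder) \<Rightarrow> 'a set \<Rightarrow> 'a set \<Rightarrow> 'a rel \<Rightarrow> bool" where
  "bridges A X Y Z \<longleftrightarrow> Z \<subseteq> {(u, v). u \<in> X \<union> Y \<and> v \<in> X \<union> Y \<and> A u < A v} \<and>
     (\<forall>u v. succ_in A (X \<union> Y) u v \<and> (u \<in> X \<and> v \<in> Y \<or> u \<in> Y \<and> v \<in> X) \<longrightarrow> (u, v) \<in> Z)"

lemma bridges_commute: "bridges A X Y Z \<longleftrightarrow> bridges A Y X Z"
  unfolding bridges_def by (auto simp: Un_commute)

lemma bridges_empty: "bridges A {} Y {}"
  by (simp add: bridges_def)

lemma bridges_insert:
  assumes Z: "bridges A X Y Z" and "q \<in> Y" and q_min: "\<forall>y\<in>Y - {q}. A q < A y"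
    and p_min: "\<forall>x\<in>X. A p < A x" and "A p < A q"
  shows "bridges A (insert p X) Y (insert (p, q) Z)"
  unfolding bridges_def
proof (intro conjI allI impI)
  show "insert (p, q) Z \<subseteq> {(u, v). u \<in> insert p X \<union> Y \<and> v \<in> insert p X \<union> Y \<and> A u < A v}"
    using Z \<open>q \<in> Y\<close> \<open>A p < A q\<close> unfolding bridges_def by auto
next
  fix u v
  assume uv: "succ_in A (insert p X \<union> Y) u v \<and> (u \<in> insert p X \<and> v \<in> Y \<or> u \<in> Y \<and> v \<in> insert p X)"
  have q_le: "A q \<le> A y" if "y \<in> Y" for y
    using q_min that by (cases "y = q") (auto simp: less_imp_le)
  have "p \<notin> Y"
    using q_le[of p] \<open>A p < A q\<close> by auto
  show "(u, v) \<in> insert (p, q) Z"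
  proof (cases "u = p")
    case True
    then have "v \<in> Y"
      using uv \<open>p \<notin> Y\<close> by auto
    then have "v = q"
      using uv True q_min \<open>q \<in> Y\<close> \<open>A p < A q\<close> unfolding succ_in_def by blast
    then show ?thesis using True by simp
  next
    case False
    have "v \<noteq> p"
    proof
      assume "v = p"
      then have "u \<in> Y" "A u < A p" using uv False \<open>p \<notin> Y\<close> by (auto simp: succ_in_def)
      then show False using q_le[of u] \<open>A p < A q\<close> by simp
    qed
    then have "succ_in A (X \<union> Y) u v \<and> (u \<in> X \<and> v \<in> Y \<or> u \<in> Y \<and> v \<in> X)"
      using uv False by (auto simp: succ_in_def)
    then show ?thesis using Z unfolding bridges_def by blast
  qed
qed

lemma zipm_bridges:
  assumes "ascending A xs" "ascending A ys" "xs \<noteq> []" "ys \<noteq> []"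
    and "set xs \<inter> set ys = {}" "inj_on A (set xs \<union> set ys)"
    and "traverses nx xs" "traverses ny ys" "length xs + length ys \<le> k"
  shows "bridges A (set xs) (set ys) (zipm k A nx ny (Some (hd xs)) (Some (hd ys)))"
  using assms
proof (induction k arbitrary: xs ys)
  case 0
  then show ?case by simp
next
  case (Suc k)
  obtain p xs' where xs: "xs = p # xs'" using \<open>xs \<noteq> []\<close> by (cases xs) auto
  obtain q ys' where ys: "ys = q # ys'" using \<open>ys \<noteq> []\<close> by (cases ys) auto
  have "A p \<noteq> A q"
    using Suc.prems(5,6) xs ys by (auto dest: inj_onD)
  then consider "A p < A q" | "A q < A p" by linarith
  then show ?case
  proof cases
    case 1
    have "bridges A (set xs') (set ys) (zipm k A nx ny (nx p) (Some q))"
    proof (cases xs')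
      case Nil
      then have "nx p = None" using \<open>traverses nx xs\<close> xs by (simp add: traverses_def)
      then show ?thesis using Nil by (simp add: bridges_empty)
    next
      case (Cons b xs'')
      then have "nx p = Some b" using \<open>traverses nx xs\<close> xs by (simp add: traverses_def)
      moreover have "bridges A (set xs') (set ys) (zipm k A nx ny (Some (hd xs')) (Some (hd ys)))"
        by (rule Suc.IH) (use Suc.prems xs Cons in \<open>auto simp: traverses_def intro: inj_on_subset\<close>)
      ultimately show ?thesis using Cons ys by simp
    qed
    then show ?thesis
      using bridges_insert[of A "set xs'" "set ys" _ q p] 1 Suc.prems(1,2) xs ys by simp
  next
    case 2
    have "bridges A (set ys') (set xs) (zipm k A nx ny (Some p) (ny q))"
    proof (cases ys')
      case Nil
      then have "ny q = None" using \<open>traverses ny ys\<close> ys by (simp add: traverses_def)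
      then show ?thesis using Nil by (simp add: bridges_empty)
    next
      case (Cons b ys'')
      then have "ny q = Some b" using \<open>traverses ny ys\<close> ys by (simp add: traverses_def)
      moreover have "bridges A (set xs) (set ys') (zipm k A nx ny (Some (hd xs)) (Some (hd ys')))"
        by (rule Suc.IH) (use Suc.prems ys Cons in \<open>auto simp: traverses_def intro: inj_on_subset\<close>)
      ultimately show ?thesis using Cons xs bridges_commute by fastforce
    qed
    then have "bridges A (set ys) (set xs) (zipm (Suc k) A nx ny (Some (hd xs)) (Some (hd ys)))"
      using bridges_insert[of A "set ys'" "set xs" _ p q] 2 Suc.prems(1,2) xs ys by simp
    then show ?thesis using bridges_commute by blast
  qed
qed

section \<open>Depth-first search along ascending blocks\<close>

definition chain_arcs :: "'a list list \<Rightarrow> 'a rel" where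
  "chain_arcs Ms = (\<Union>L\<in>set Ms. path_arcs L)"

lemma dom_map_of_zip_tl: "dom (map_of (zip (tl xs) xs)) = set (tl xs)"
  by (simp add: dom_map_of_conv_image_fst map_fst_zip_take flip: set_map)

lemma map_of_zip_tl_eq_Some_iff:
  "distinct xs \<Longrightarrow> map_of (zip (tl xs) xs) w = Some u \<longleftrightarrow> (u, w) \<in> path_arcs xs"
proof -
  assume "distinct xs"
  then have "map_of (zip (tl xs) xs) w = Some u \<longleftrightarrow> (w, u) \<in> set (zip (tl xs) xs)"
    by (intro map_of_eq_Some_iff) (simp add: map_fst_zip_take distinct_tl)
  also have "\<dots> \<longleftrightarrow> (u, w) \<in> path_arcs xs"
    by (subst zip_commute) auto
  finally show ?thesis .
qed

fun pred_map :: "'a list list \<Rightarrow> 'a \<Rightarrow> 'a option" where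
  "pred_map [] = Map.empty"
| "pred_map (L # Ms) = map_of (zip (tl L) L) ++ pred_map Ms"

lemma pred_map_eq_Some_iff:
  "distinct (concat Ms) \<Longrightarrow> pred_map Ms w = Some u \<longleftrightarrow> (u, w) \<in> chain_arcs Ms"
proof (induction Ms arbitrary: u)
  case Nil
  then show ?case by (simp add: chain_arcs_def)
next
  case (Cons L Ms)
  show ?case
  proof (cases "pred_map Ms w")
    case None
    then show ?thesis
      using Cons map_of_zip_tl_eq_Some_iff[of L w u] by (auto simp: chain_arcs_def map_add_def)
  next
    case (Some u')
    then have "(u', w) \<in> chain_arcs Ms" using Cons.IH[of u'] Cons.prems by simp
    then have "w \<notin> set L"
      using Cons.prems path_arcs_subset by (fastforce simp: chain_arcs_def)
    then have "(u, w) \<notin> path_arcs L"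
      using path_arcs_subset by blast
    then have "(u, w) \<in> chain_arcs (L # Ms) \<longleftrightarrow> u' = u"
      using Cons.IH[of u] Cons.prems Some by (auto simp: chain_arcs_def)
    then show ?thesis
      using Some by simp
  qed
qed

lemma visit_list_visited: "set ws \<subseteq> fst st \<Longrightarrow> visit_list k n H A u ws st = st"
  by (induction ws arbitrary: st) auto

lemma out_sorted_first_out:
  "first_out n G A UNIV p = (case out_sorted n G A p of [] \<Rightarrow> None | w # _ \<Rightarrow> Some w)"
  by (simp add: first_out_def out_sorted_def)

lemma out_sorted_ascending_block:
  assumes inj: "inj_on A {1..n}" and inc: "\<forall>(x, w)\<in>H. A x < A w"
    and asc: "ascending A (v # s # L)" and "set (v # s # L) \<subseteq> {1..n}"
    and closed: "H `` {v} \<subseteq> set (v # s # L)" and "(v, s) \<in> H"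
  shows "\<exists>rest. out_sorted n H A v = s # rest \<and> set rest \<subseteq> set (v # s # L)"
proof -
  have out: "w \<in> set (s # L) \<and> A v < A w" if "(v, w) \<in> H" for w
    using that closed inc by fastforce
  have "first_out n H A UNIV v = Some s"
  proof (rule first_out_eq_SomeI[OF inj])
    show "s \<in> {1..n}" "(v, s) \<in> H" "s \<in> UNIV"
      using assms(4,6) by auto
    show "A s \<le> A w" if "(v, w) \<in> H" for w
      using out[OF that] ascending_hd_le[of A "s # L" w] asc by simp
  qed
  then obtain rest where os: "out_sorted n H A v = s # rest"
    by (auto simp: out_sorted_first_out split: list.splits)
  have "set rest \<subseteq> set (out_sorted n H A v)"
    using os by auto
  also have "\<dots> \<subseteq> H `` {v}"
    by (auto simp: out_sorted_def)
  finally have "set rest \<subseteq> H `` {v}" .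
  then show ?thesis
    using os closed by blast
qed

text \<open>The A-smallest out-neighbour of an element of a closed ascending block is its successor
  in the block, so the DFS walks down the block, and when the recursion returns all other
  out-neighbours have already been visited.\<close>

lemma visit_ascending_block:
  assumes inj: "inj_on A {1..n}" and inc: "\<forall>(x, w)\<in>H. A x < A w"
  shows "ascending A L \<Longrightarrow> L \<noteq> [] \<Longrightarrow> set L \<subseteq> {1..n} \<Longrightarrow> H `` set L \<subseteq> set L \<Longrightarrow>
    path_arcs L \<subseteq> H \<Longrightarrow> set L \<inter> vis = {} \<Longrightarrow> length L \<le> k \<Longrightarrow>
    visit k n H A (hd L) (vis, par) = (vis \<union> set L, par ++ map_of (zip (tl L) L))"
proof (induction L arbitrary: vis par k)
  case (Cons v L)
  obtain k' where k: "k = Suc k'" using Cons.prems(7) by (cases k) auto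
  have visit_v: "visit k n H A (hd (v # L)) (vis, par) =
      visit_list k' n H A v (out_sorted n H A v) (insert v vis, par)"
    using k by simp
  show ?case
  proof (cases L)
    case Nil
    have "out_sorted n H A v = []"
      using Cons.prems(4) inc Nil by (force simp: out_sorted_def filter_empty_conv)
    then show ?thesis using visit_v Nil by simp
  next
    case (Cons s L')
    then obtain rest where os: "out_sorted n H A v = s # rest" and rest: "set rest \<subseteq> set (v # L)"
      using out_sorted_ascending_block[OF inj inc, of v s L'] Cons.prems(1,3-5) by auto
    have IH: "visit k' n H A (hd L) (insert v vis, par(s \<mapsto> v)) =
        (insert v vis \<union> set L, par(s \<mapsto> v) ++ map_of (zip (tl L) L))"
    proof (rule Cons.IH)
      show "H `` set L \<subseteq> set L"
        using Cons.prems(1,4) inc by fastforce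
    qed (use Cons.prems k Cons in auto)
    have "s \<notin> set (tl L)"
      using ascending_distinct[OF Cons.prems(1)] Cons by simp
    then have "s \<notin> dom (map_of (zip (tl L) L))"
      by (simp add: dom_map_of_zip_tl)
    then have par: "par(s \<mapsto> v) ++ map_of (zip (tl L) L) = par ++ map_of (zip (tl (v # L)) (v # L))"
      using Cons by (simp add: map_add_upd_left)
    have "s \<notin> insert v vis"
      using Cons.prems(1,6) Cons by auto
    then have "visit k n H A (hd (v # L)) (vis, par) =
        visit_list k' n H A v rest (visit k' n H A s (insert v vis, par(s \<mapsto> v)))"
      using visit_v os by simp
    also have "\<dots> = visit_list k' n H A v rest (vis \<union> set (v # L), par ++ map_of (zip (tl (v # L)) (v # L)))"
      using IH par Cons by (simp add: insert_commute)
    also have "\<dots> = (vis \<union> set (v # L), par ++ map_of (zip (tl (v # L)) (v # L)))"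
      by (rule visit_list_visited) (use rest in auto)
    finally show ?thesis .
  qed
qed simp

lemma length_le_if_distinct_subset: "distinct xs \<Longrightarrow> set xs \<subseteq> {1..n} \<Longrightarrow> length xs \<le> n"
  by (metis card_atLeastAtMost card_mono diff_Suc_1 distinct_card finite_atLeastAtMost)

definition closed_block :: "nat \<Rightarrow> (nat \<Rightarrow> real) \<Rightarrow> graph \<Rightarrow> nat list \<Rightarrow> bool" where
  "closed_block n A H L \<longleftrightarrow>
     L \<noteq> [] \<and> ascending A L \<and> set L \<subseteq> {1..n} \<and> H `` set L \<subseteq> set L \<and> path_arcs L \<subseteq> H"

lemma dfs_run_blocks:
  assumes inj: "inj_on A {1..n}" and inc: "\<forall>(x, w)\<in>H. A x < A w"
  shows "\<forall>L\<in>set Ms. closed_block n A H L \<Longrightarrow>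
    distinct (concat Ms) \<Longrightarrow> set (concat Ms) \<inter> vis = {} \<Longrightarrow>
    dfs_run n H A (map hd Ms) (vis, par) = (vis \<union> set (concat Ms), par ++ pred_map Ms)"
proof (induction Ms arbitrary: vis par)
  case Nil
  then show ?case by simp
next
  case (Cons L Ms)
  have L: "L \<noteq> []" "ascending A L" "set L \<subseteq> {1..n}" "H `` set L \<subseteq> set L" "path_arcs L \<subseteq> H"
    using Cons.prems(1) by (auto simp: closed_block_def)
  have len: "length L \<le> Suc n"
    using length_le_if_distinct_subset[of L n] Cons.prems(2) L(3) by simp
  have "visit (Suc n) n H A (hd L) (vis, par) = (vis \<union> set L, par ++ map_of (zip (tl L) L))"
    by (rule visit_ascending_block[OF inj inc L(2,1,3,4,5)]) (use len Cons.prems(3) in auto)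
  moreover have "hd L \<notin> vis"
    using Cons.prems(3) L(1) by (cases L) auto
  ultimately show ?case
    using Cons.IH[of "vis \<union> set L" "par ++ map_of (zip (tl L) L)"] Cons.prems
    by (auto simp: Un_assoc map_add_assoc)
qed

lemma dfs_forest_blocks:
  assumes "inj_on A {1..n}" and "\<forall>(x, w)\<in>H. A x < A w"
    and "\<forall>L\<in>set Ms. closed_block n A H L" and "distinct (concat Ms)"
  shows "dfs_forest n H A (map hd Ms) = chain_arcs Ms"
  using dfs_run_blocks[OF assms, of "{}" Map.empty] pred_map_eq_Some_iff[OF assms(4)]
  by (simp add: dfs_forest_def)

lemma visit_parents_subset:
  shows "{(u, w). snd st w = Some u} \<subseteq> G \<Longrightarrow> {(u, w). snd (visit k n G A x st) w = Some u} \<subseteq> G"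
    and "{(u, w). snd st w = Some u} \<subseteq> G \<Longrightarrow> (\<forall>w\<in>set ws. (x, w) \<in> G) \<Longrightarrow>
      {(u, w). snd (visit_list k n G A x ws st) w = Some u} \<subseteq> G"
proof (induction k n G A x st and k n G A x ws st rule: visit_visit_list.induct)
  case (2 k n G A u vis par)
  then show ?case by (simp add: out_sorted_def)
next
  case (4 k n G A u w ws vis par)
  then have "{(u', w'). (par(w \<mapsto> u)) w' = Some u'} \<subseteq> G"
    by auto
  then show ?case
    using 4 by (cases "w \<in> vis") (auto simp: prod.collapse)
qed simp_all

lemma dfs_run_parents_subset:
  "{(u, w). snd st w = Some u} \<subseteq> G \<Longrightarrow> {(u, w). snd (dfs_run n G A ls st) w = Some u} \<subseteq> G"
proof (induction n G A ls st rule: dfs_run.induct)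
  case (2 n G A l ls vis par)
  then show ?case
    using visit_parents_subset(1)[of "(vis, par)" G "Suc n" n A l] by (auto simp: prod.collapse)
qed simp

lemma dfs_forest_subset: "dfs_forest n G A ls \<subseteq> G"
  unfolding dfs_forest_def by (rule dfs_run_parents_subset) simp

section \<open>Block partitions and one round\<close>

definition block_partition :: "nat \<Rightarrow> (nat \<Rightarrow> real) \<Rightarrow> nat list list \<Rightarrow> bool" where
  "block_partition n A Ls \<longleftrightarrow> (\<forall>L\<in>set Ls. L \<noteq> [] \<and> ascending A L) \<and>
     distinct (concat Ls) \<and> set (concat Ls) = {1..n}"

definition block_order :: "('a \<Rightarrow> 'b::linorder) \<Rightarrow> 'a list list \<Rightarrow> 'a rel" where
  "block_order A Ls = {(u, w). \<exists>L\<in>set Ls. u \<in> set L \<and> w \<in> set L \<and> A u < A w}"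

definition block_graph :: "('a \<Rightarrow> 'b::linorder) \<Rightarrow> 'a list list \<Rightarrow> 'a rel \<Rightarrow> bool" where
  "block_graph A Ls G \<longleftrightarrow> chain_arcs Ls \<subseteq> G \<and> G \<subseteq> block_order A Ls"

lemma distinct_concat_block_eq:
  "distinct (concat Ls) \<Longrightarrow> L \<in> set Ls \<Longrightarrow> M \<in> set Ls \<Longrightarrow>
    y \<in> set L \<Longrightarrow> y \<in> set M \<Longrightarrow> L = M"
  by (induction Ls) auto

lemma block_graph_Image_block:
  assumes "block_partition n A Ls" "block_graph A Ls G" "L \<in> set Ls"
  shows "G `` set L \<subseteq> set L"
  using assms distinct_concat_block_eq[of Ls L]
  unfolding block_partition_def block_graph_def block_order_def by blast

lemma block_graph_chain_arcs:
  assumes "block_partition n A Ls"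
  shows "block_graph A Ls (chain_arcs Ls)"
  using assms path_arcs_ascending_iff[of A]
  by (fastforce simp: block_graph_def block_partition_def block_order_def chain_arcs_def succ_in_def)

lemma dfs_forest_block_graph:
  assumes "inj_on A {1..n}" "block_partition n A Ls" "block_graph A Ls G"
  shows "dfs_forest n G A (map hd Ls) = chain_arcs Ls"
proof (rule dfs_forest_blocks[OF assms(1)])
  show "\<forall>(x, w)\<in>G. A x < A w"
    using assms(3) by (auto simp: block_graph_def block_order_def)
  show "\<forall>L\<in>set Ls. closed_block n A G L"
    using assms(2,3) block_graph_Image_block[OF assms(2,3)]
    by (auto simp: closed_block_def block_partition_def block_graph_def chain_arcs_def)
  show "distinct (concat Ls)"
    using assms(2) by (simp add: block_partition_def)
qed

lemma path_arcs_rtrancl: "path_arcs xs \<subseteq> E \<Longrightarrow> y \<in> set xs \<Longrightarrow> (hd xs, y) \<in> E\<^sup>*"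
proof (induction xs rule: induct_list012)
  case (3 a b xs)
  then have "(a, b) \<in> E" "y = a \<or> (b, y) \<in> E\<^sup>*" by auto
  then show ?case by auto
qed auto

lemma comp_eq_block:
  assumes part: "block_partition n A Ls" and G: "block_graph A Ls G"
    and L: "L \<in> set Ls" and x: "x \<in> set L"
  shows "comp n G x = set L"
proof
  show "comp n G x \<subseteq> set L"
  proof
    fix y assume "y \<in> comp n G x"
    then have "(x, y) \<in> (G \<union> G\<inverse>)\<^sup>*" by (simp add: comp_def)
    then show "y \<in> set L"
    proof (induction rule: rtrancl_induct)
      case (step y z)
      then obtain M where M: "M \<in> set Ls" "y \<in> set M" "z \<in> set M"
        using G by (auto simp: block_graph_def block_order_def)
      have "M = L"
        by (rule distinct_concat_block_eq[of Ls M L y])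
          (use part M L step.IH in \<open>simp_all add: block_partition_def\<close>)
      then show ?case using M by simp
    qed (use x in simp)
  qed
  let ?R = "(G \<union> G\<inverse>)\<^sup>*"
  have sub: "path_arcs L \<subseteq> G \<union> G\<inverse>"
    using G L by (auto simp: block_graph_def chain_arcs_def)
  have from_hd: "(hd L, y) \<in> ?R" if "y \<in> set L" for y
    using path_arcs_rtrancl[OF sub that] .
  have "sym ?R"
    by (intro sym_rtrancl sym_Un_converse)
  then have "(x, hd L) \<in> ?R"
    using from_hd[OF x] by (rule symD)
  show "set L \<subseteq> comp n G x"
  proof
    fix y assume y: "y \<in> set L"
    then have "y \<in> {1..n}"
      using part L by (auto simp: block_partition_def)
    moreover have "(x, y) \<in> ?R"
      using \<open>(x, hd L) \<in> ?R\<close> from_hd[OF y] by (rule rtrancl_trans)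
    ultimately show "y \<in> comp n G x"
      by (simp add: comp_def)
  qed
qed

lemma arg_min_on_ascending: "xs \<noteq> [] \<Longrightarrow> ascending A xs \<Longrightarrow> arg_min_on A (set xs) = hd xs"
proof -
  assume "xs \<noteq> []" "ascending A xs"
  then have "arg_min_on A (set xs) \<in> set xs" "\<forall>y\<in>set xs. A (arg_min_on A (set xs)) \<le> A y"
    using arg_min_if_finite[of "set xs" A] by (auto simp: not_less[symmetric])
  then show ?thesis
    using ascending_hd_eq[OF \<open>ascending A xs\<close>] by simp
qed

fun merge_pairs :: "('a \<Rightarrow> 'b::linorder) \<Rightarrow> 'a list list \<Rightarrow> 'a list list" where
  "merge_pairs A (a # b # rest) = sort_key A (a @ b) # merge_pairs A rest"
| "merge_pairs A Ls = Ls"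

lemma length_merge_pairs: "length (merge_pairs A Ls) = (length Ls + 1) div 2"
  by (induction A Ls rule: merge_pairs.induct) auto

lemma mset_concat_merge_pairs: "mset (concat (merge_pairs A Ls)) = mset (concat Ls)"
  by (induction A Ls rule: merge_pairs.induct) auto

lemma block_order_merge_pairs: "block_order A Ls \<subseteq> block_order A (merge_pairs A Ls)"
  by (induction A Ls rule: merge_pairs.induct) (auto simp: block_order_def)

lemma hd_sort_key_append:
  assumes "ascending A a" "ascending A b" "a \<noteq> []" "b \<noteq> []"
    and "set a \<inter> set b = {}" "inj_on A (set a \<union> set b)"
  shows "hd (sort_key A (a @ b)) = (if A (hd a) < A (hd b) then hd a else hd b)"
proof -
  have asc: "ascending A (sort_key A (a @ b))"
    using assms by (intro ascending_sort_key) (auto dest: ascending_distinct)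
  have "A (hd a) \<noteq> A (hd b)"
    using assms(3-6) by (metis IntI UnI1 UnI2 empty_iff hd_in_set inj_onD)
  then show ?thesis
    using ascending_hd_le[OF assms(1)] ascending_hd_le[OF assms(2)] assms(3,4)
    by (intro ascending_hd_eq[OF asc]) (auto simp: not_less intro: order.trans order.trans[OF less_imp_le])
qed

lemma merge_pairs_block_partition:
  assumes "inj_on A {1..n}" "block_partition n A Ls"
  shows "block_partition n A (merge_pairs A Ls)"
    and "mstep_roots A (map hd Ls) = map hd (merge_pairs A Ls)"
proof -
  have merged: "(\<forall>M\<in>set (merge_pairs A Ls). M \<noteq> [] \<and> ascending A M) \<and>
      mstep_roots A (map hd Ls) = map hd (merge_pairs A Ls)"
    if "\<forall>L\<in>set Ls. L \<noteq> [] \<and> ascending A L" "distinct (concat Ls)" "set (concat Ls) \<subseteq> {1..n}" for Ls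
    using that
  proof (induction Ls rule: induct_list012)
    case (3 a b rest)
    have ab: "a \<noteq> []" "ascending A a" "b \<noteq> []" "ascending A b" "set a \<inter> set b = {}"
      using "3.prems"(1,2) by auto
    have "inj_on A (set a \<union> set b)"
      by (rule inj_on_subset[OF assms(1)]) (use "3.prems"(3) in auto)
    then have "sort_key A (a @ b) \<noteq> [] \<and> ascending A (sort_key A (a @ b)) \<and>
        hd (sort_key A (a @ b)) = (if A (hd a) < A (hd b) then hd a else hd b)"
      using ab hd_sort_key_append[of A a b] ascending_sort_key[of "a @ b" A] ascending_distinct[of A]
      by (simp flip: length_greater_0_conv)
    moreover have "(\<forall>M\<in>set (merge_pairs A rest). M \<noteq> [] \<and> ascending A M) \<and>
        mstep_roots A (map hd rest) = map hd (merge_pairs A rest)"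
      by (rule "3.IH"(1)) (use "3.prems" in auto)
    ultimately show ?case
      by (simp del: sort_key_simps)
  qed auto
  note part = assms(2)[unfolded block_partition_def]
  have blocks: "(\<forall>M\<in>set (merge_pairs A Ls). M \<noteq> [] \<and> ascending A M) \<and>
      mstep_roots A (map hd Ls) = map hd (merge_pairs A Ls)"
    using merged[of Ls] part by simp
  have ms: "mset (concat (merge_pairs A Ls)) = mset (concat Ls)"
    by (rule mset_concat_merge_pairs)
  have "distinct (concat (merge_pairs A Ls))"
    using mset_eq_imp_distinct_iff[OF ms] part by simp
  moreover have "set (concat (merge_pairs A Ls)) = {1..n}"
    using mset_eq_setD[OF ms] part by simp
  ultimately show "block_partition n A (merge_pairs A Ls)"
    using blocks part by (simp add: block_partition_def)
  show "mstep_roots A (map hd Ls) = map hd (merge_pairs A Ls)"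
    using blocks part by simp
qed

lemma succ_in_subset:
  "succ_in A S x y \<Longrightarrow> T \<subseteq> S \<Longrightarrow> x \<in> T \<Longrightarrow> y \<in> T \<Longrightarrow> succ_in A T x y"
  by (auto simp: succ_in_def)

lemma path_arcs_sort_key_append:
  assumes a: "ascending A a" and b: "ascending A b" and "set a \<inter> set b = {}"
    and "inj_on A (set a \<union> set b)" and Z: "bridges A (set a) (set b) Z"
  shows "path_arcs (sort_key A (a @ b)) \<subseteq> path_arcs a \<union> path_arcs b \<union> Z"
proof
  fix xy assume xy: "xy \<in> path_arcs (sort_key A (a @ b))"
  obtain x y where [simp]: "xy = (x, y)" by fastforce
  have "ascending A (sort_key A (a @ b))"
    using assms by (intro ascending_sort_key) (auto dest: ascending_distinct)
  then have succ: "succ_in A (set a \<union> set b) x y"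
    using xy path_arcs_ascending_iff by fastforce
  consider "x \<in> set a" "y \<in> set a" | "x \<in> set b" "y \<in> set b"
    | "x \<in> set a \<and> y \<in> set b \<or> x \<in> set b \<and> y \<in> set a"
    using succ by (auto simp: succ_in_def)
  then show "xy \<in> path_arcs a \<union> path_arcs b \<union> Z"
  proof cases
    case 1
    then show ?thesis using succ_in_subset[OF succ] path_arcs_ascending_iff[OF a] by simp
  next
    case 2
    then show ?thesis using succ_in_subset[OF succ] path_arcs_ascending_iff[OF b] by simp
  next
    case 3
    then show ?thesis using succ Z by (simp add: bridges_def)
  qed
qed

lemma comp_merge_bridges:
  assumes inj: "inj_on A {1..n}" and part: "block_partition n A Ls" and G: "block_graph A Ls G"
    and "a \<in> set Ls" "b \<in> set Ls" "set a \<inter> set b = {}"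
  shows "bridges A (set a) (set b) (comp_merge n A G (hd a) (hd b))"
proof -
  have blocks: "L \<noteq> []" "ascending A L" "set L \<subseteq> {1..n}" if "L \<in> set Ls" for L
    using part that by (auto simp: block_partition_def)
  have trav: "traverses (first_out n G A (set L)) L" if "L \<in> set Ls" for L
  proof (rule traverses_first_out[OF inj blocks[OF that]])
    show "path_arcs L \<subseteq> G"
      using G that by (auto simp: block_graph_def chain_arcs_def)
    show "w \<in> set L \<and> A x < A w" if "(x, w) \<in> G" "w \<in> set L" for x w
      using G that by (auto simp: block_graph_def block_order_def)
  qed simp
  have "length a + length b \<le> 2 * n + 2"
    using length_le_if_distinct_subset[of _ n] blocks assms(4,5) ascending_distinct
    by (metis add_mono le_add1 mult_2 trans_le_add1)
  then have "bridges A (set a) (set b)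
      (zipm (2 * n + 2) A (first_out n G A (set a)) (first_out n G A (set b)) (Some (hd a)) (Some (hd b)))"
    using assms(4-6) blocks trav inj_on_subset[OF inj] by (intro zipm_bridges) auto
  moreover have "comp n G (hd a) = set a" "comp n G (hd b) = set b"
    using comp_eq_block[OF part G] blocks assms(4,5) by simp_all
  moreover have "arg_min_on A (set a) = hd a" "arg_min_on A (set b) = hd b"
    using arg_min_on_ascending[OF blocks(1,2)[OF assms(4)]]
      arg_min_on_ascending[OF blocks(1,2)[OF assms(5)]] by simp_all
  ultimately show ?thesis
    by (simp only: comp_merge_def Let_def)
qed

lemma mstep_arcs_merge_pairs:
  assumes inj: "inj_on A {1..n}" and part: "block_partition n A Ls" and G: "block_graph A Ls G"
  shows "set Ks \<subseteq> set Ls \<Longrightarrow> distinct (concat Ks) \<Longrightarrow>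
    mstep_arcs n A G (map hd Ks) \<subseteq> block_order A (merge_pairs A Ks) \<and>
    chain_arcs (merge_pairs A Ks) \<subseteq> G \<union> mstep_arcs n A G (map hd Ks)"
proof (induction Ks rule: induct_list012)
  case 1
  then show ?case by (simp add: chain_arcs_def)
next
  case (2 L)
  then show ?case using G by (auto simp: block_graph_def chain_arcs_def)
next
  case (3 a b rest)
  let ?Z = "comp_merge n A G (hd a) (hd b)"
  have ab: "a \<in> set Ls" "b \<in> set Ls" "set a \<inter> set b = {}"
    using "3.prems" by auto
  have asc: "ascending A a" "ascending A b"
    using part ab by (auto simp: block_partition_def)
  have "inj_on A (set a \<union> set b)"
    by (rule inj_on_subset[OF inj]) (use part ab in \<open>auto simp: block_partition_def\<close>)
  have Z: "bridges A (set a) (set b) ?Z"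
    by (rule comp_merge_bridges[OF inj part G ab])
  then have "?Z \<subseteq> block_order A [sort_key A (a @ b)]"
    by (auto simp: bridges_def block_order_def)
  moreover have "path_arcs (sort_key A (a @ b)) \<subseteq> G \<union> ?Z"
    using path_arcs_sort_key_append[OF asc ab(3) \<open>inj_on A (set a \<union> set b)\<close> Z] G ab(1,2)
    by (auto simp: block_graph_def chain_arcs_def)
  moreover have "mstep_arcs n A G (map hd rest) \<subseteq> block_order A (merge_pairs A rest) \<and>
      chain_arcs (merge_pairs A rest) \<subseteq> G \<union> mstep_arcs n A G (map hd rest)"
    using "3.IH"(1) "3.prems" by simp
  ultimately show ?case
    by (auto simp: block_order_def chain_arcs_def)
qed

lemma round_step_blocks:
  assumes inj: "inj_on A {1..n}" and part: "block_partition n A Ls" and G: "block_graph A Ls G"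
  shows "round_step n A (G, map hd Ls) = (chain_arcs (merge_pairs A Ls), map hd (merge_pairs A Ls))"
proof -
  let ?H = "G \<union> mstep_arcs n A G (map hd Ls)"
  note merged = merge_pairs_block_partition[OF inj part]
  have "block_graph A (merge_pairs A Ls) ?H"
    using mstep_arcs_merge_pairs[OF inj part G order_refl] part G block_order_merge_pairs[of A Ls]
    by (auto simp: block_graph_def block_partition_def)
  then have "dfs_forest n ?H A (map hd (merge_pairs A Ls)) = chain_arcs (merge_pairs A Ls)"
    by (rule dfs_forest_block_graph[OF inj merged(1)])
  then show ?thesis
    using merged(2) by (simp add: round_step_def merge_step_def)
qed

lemma funpow_round_step:
  assumes "inj_on A {1..n}"
  shows "block_partition n A Ls \<Longrightarrow> block_graph A Ls G \<Longrightarrow>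
    (round_step n A ^^ Suc i) (G, map hd Ls) =
      (chain_arcs ((merge_pairs A ^^ Suc i) Ls), map hd ((merge_pairs A ^^ Suc i) Ls))"
proof (induction i arbitrary: G Ls)
  case 0
  then show ?case using round_step_blocks[OF assms] by simp
next
  case (Suc i)
  let ?Ls' = "merge_pairs A Ls"
  have "(round_step n A ^^ Suc (Suc i)) (G, map hd Ls) =
      (round_step n A ^^ Suc i) (chain_arcs ?Ls', map hd ?Ls')"
    using round_step_blocks[OF assms Suc.prems] by (simp only: funpow_Suc_right o_apply)
  also have "\<dots> = (chain_arcs ((merge_pairs A ^^ Suc i) ?Ls'), map hd ((merge_pairs A ^^ Suc i) ?Ls'))"
    using merge_pairs_block_partition(1)[OF assms Suc.prems(1)]
    by (intro Suc.IH block_graph_chain_arcs)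
  finally show ?case
    by (simp only: funpow_Suc_right o_apply)
qed

lemma length_funpow_merge_pairs: "length ((merge_pairs A ^^ i) Ls) \<le> max 1 (length Ls - i)"
  by (induction i) (auto simp: length_merge_pairs)

lemma funpow_merge_pairs_block_partition:
  "inj_on A {1..n} \<Longrightarrow> block_partition n A Ls \<Longrightarrow> block_partition n A ((merge_pairs A ^^ i) Ls)"
  by (induction i) (simp_all add: merge_pairs_block_partition)

lemma single_block_path:
  assumes "block_partition n A Ms" "length Ms \<le> 1"
  obtains L where "chain_arcs Ms = path_arcs L" "ascending A L" "set L = {1..n}"
proof (cases Ms)
  case Nil
  then show ?thesis
    using assms(1) that[of "[]"] by (simp add: block_partition_def chain_arcs_def)
next
  case (Cons L Ms')
  then have "Ms = [L]"
    using assms(2) by simp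
  then show ?thesis
    using assms(1) that[of L] by (simp add: block_partition_def chain_arcs_def)
qed

lemma is_ham_path_graph_path_arcs:
  "distinct L \<Longrightarrow> set L = {1..n} \<Longrightarrow> is_ham_path_graph n (path_arcs L)"
  unfolding is_ham_path_graph_def by blast

definition precedes :: "'a list \<Rightarrow> 'a \<Rightarrow> 'a \<Rightarrow> bool" where
  "precedes xs u v \<longleftrightarrow> (\<exists>i j. i < j \<and> j < length xs \<and> xs ! i = u \<and> xs ! j = v)"

lemma is_topsort_iff_precedes:
  "is_topsort n G ord \<longleftrightarrow> distinct ord \<and> set ord = {1..n} \<and> (\<forall>(u, v)\<in>G. precedes ord u v)"
  by (simp add: is_topsort_def precedes_def)

lemma precedes_nth_iff:
  assumes "distinct xs" "i < length xs" "j < length xs"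
  shows "precedes xs (xs ! i) (xs ! j) \<longleftrightarrow> i < j"
proof
  assume "precedes xs (xs ! i) (xs ! j)"
  then obtain i' j' where "i' < j'" "j' < length xs" "xs ! i' = xs ! i" "xs ! j' = xs ! j"
    by (auto simp: precedes_def)
  then show "i < j"
    using assms by (simp add: nth_eq_iff_index_eq)
qed (use assms in \<open>auto simp: precedes_def\<close>)

lemma transp_precedes:
  assumes "distinct xs"
  shows "transp (precedes xs)"
proof (rule transpI)
  fix u v w assume "precedes xs u v" "precedes xs v w"
  then obtain i j j' k where "i < j" "j < length xs" "xs ! i = u" "xs ! j = v"
    and "j' < k" "k < length xs" "xs ! j' = v" "xs ! k = w"
    by (auto simp: precedes_def)
  moreover from this have "j = j'"
    using nth_eq_iff_index_eq[OF assms, of j j'] by simp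
  ultimately have "i < k" "k < length xs" "xs ! i = u" "xs ! k = w"
    by simp_all
  then show "precedes xs u w"
    unfolding precedes_def by blast
qed

lemma sorted_wrt_precedes_if_path_arcs:
  assumes "distinct ord" and arcs: "\<forall>(u, v)\<in>path_arcs L. precedes ord u v"
  shows "sorted_wrt (precedes ord) L"
proof -
  have "(L ! a, L ! Suc a) \<in> path_arcs L" if "Suc a < length L" for a
    using that by (auto simp: in_set_zip nth_tl intro!: exI[of _ a])
  then show ?thesis
    using arcs by (auto simp: sorted_wrt_iff_nth_Suc_transp[OF transp_precedes[OF assms(1)]])
qed

lemma ascending_if_sorted_wrt_precedes:
  assumes sorted: "sorted_wrt (precedes ord) L" and asc: "ascending A L"
    and ord: "distinct ord" "set ord \<subseteq> set L"
  shows "ascending A ord"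
  unfolding sorted_wrt_iff_nth_less
proof (intro allI impI)
  fix i j assume ij: "i < j" "j < length ord"
  then have "ord ! i \<in> set L" "ord ! j \<in> set L"
    using ord(2) by auto
  then obtain a b where ab: "a < length L" "L ! a = ord ! i" "b < length L" "L ! b = ord ! j"
    by (auto simp: in_set_conv_nth)
  have "a \<noteq> b"
    using ab ij ord(1) by (auto simp: nth_eq_iff_index_eq)
  moreover have "\<not> b < a"
  proof
    assume "b < a"
    then have "precedes ord (L ! b) (L ! a)"
      using sorted ab(1) by (simp add: sorted_wrt_iff_nth_less)
    then show False
      using ab ij ord(1) precedes_nth_iff[of ord j i] by simp
  qed
  ultimately have "a < b"
    by simp
  then show "A (ord ! i) < A (ord ! j)"
    using asc[unfolded sorted_wrt_iff_nth_less, rule_format, OF _ ab(3)] ab(2,4) by metis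
qed

lemma precedes_if_ascending:
  assumes asc: "ascending A ord" and "u \<in> set ord" "v \<in> set ord" "A u < A v"
  shows "precedes ord u v"
proof -
  obtain i j where ij: "i < length ord" "ord ! i = u" "j < length ord" "ord ! j = v"
    using assms(2,3) by (auto simp: in_set_conv_nth)
  have "\<not> j < i"
    using asc[unfolded sorted_wrt_iff_nth_less, rule_format, of j i] ij \<open>A u < A v\<close> by auto
  moreover have "i \<noteq> j"
    using ij \<open>A u < A v\<close> by auto
  ultimately show ?thesis
    using ij unfolding precedes_def by (intro exI[of _ i] exI[of _ j]) simp
qed

lemma is_topsort_path_arcs_iff:
  assumes asc: "ascending A L" and L: "set L = {1..n}"
  shows "is_topsort n (path_arcs L) ord \<longleftrightarrow> is_sorted_indices n A ord"
proof
  assume "is_topsort n (path_arcs L) ord"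
  then have "distinct ord" "set ord = {1..n}" "\<forall>(u, v)\<in>path_arcs L. precedes ord u v"
    by (simp_all add: is_topsort_iff_precedes)
  then show "is_sorted_indices n A ord"
    using ascending_if_sorted_wrt_precedes[OF sorted_wrt_precedes_if_path_arcs asc] L
    by (simp add: is_sorted_indices_def)
next
  assume "is_sorted_indices n A ord"
  then have ord: "distinct ord" "set ord = {1..n}" "ascending A ord"
    by (simp_all add: is_sorted_indices_def)
  have "precedes ord u v" if "(u, v) \<in> path_arcs L" for u v
    using that path_arcs_ascending_iff[OF asc] ord L
    by (intro precedes_if_ascending[OF ord(3)]) (auto simp: succ_in_def)
  then show "is_topsort n (path_arcs L) ord"
    using ord by (auto simp: is_topsort_iff_precedes)
qed

section \<open>Forests with increasing arcs\<close>

definition subtree_list :: "(nat \<Rightarrow> real) \<Rightarrow> graph \<Rightarrow> nat \<Rightarrow> nat list" where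
  "subtree_list A F v = sort_key A (sorted_list_of_set (F\<^sup>* `` {v}))"

definition unary_subtree :: "graph \<Rightarrow> nat \<Rightarrow> bool" where
  "unary_subtree F v \<longleftrightarrow> (\<forall>w\<in>F\<^sup>* `` {v}. \<exists>\<^sub>\<le>\<^sub>1c. (w, c) \<in> F)"

locale increasing_forest =
  fixes n :: nat and A :: "nat \<Rightarrow> real" and F :: graph
  assumes arc_increasing: "(u, w) \<in> F \<Longrightarrow> u \<in> {1..n} \<and> w \<in> {1..n} \<and> A u < A w"
    and unique_parent: "\<exists>\<^sub>\<le>\<^sub>1u. (u, w) \<in> F"
begin

lemma rtrancl_eq_or_less: "(a, b) \<in> F\<^sup>* \<Longrightarrow> a = b \<or> A a < A b"
  by (induction rule: rtrancl_induct) (auto dest: arc_increasing)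

lemma subtree_subset: "v \<in> {1..n} \<Longrightarrow> F\<^sup>* `` {v} \<subseteq> {1..n}"
proof
  fix w assume "v \<in> {1..n}" "w \<in> F\<^sup>* `` {v}"
  then have "(v, w) \<in> F\<^sup>*" by simp
  then show "w \<in> {1..n}"
    by (cases rule: rtranclE) (use \<open>v \<in> {1..n}\<close> arc_increasing in auto)
qed

lemma reachable_from_root:
  assumes "v \<in> {1..n}"
  shows "\<exists>r\<in>roots n F. (r, v) \<in> F\<^sup>*"
proof -
  let ?S = "{u \<in> {1..n}. (u, v) \<in> F\<^sup>*}"
  have "finite ?S" "?S \<noteq> {}"
    using assms by auto
  note m = arg_min_if_finite[OF this, of A]
  have "arg_min_on A ?S \<in> roots n F"
    unfolding roots_def
  proof (intro CollectI conjI allI notI)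
    fix u assume "(u, arg_min_on A ?S) \<in> F"
    then have "u \<in> ?S" "A u < A (arg_min_on A ?S)"
      using m(1) arc_increasing by (auto intro: converse_rtrancl_into_rtrancl)
    then show False
      using m(2) by blast
  qed (use m(1) in simp)
  then show ?thesis
    using m(1) by blast
qed

lemma ancestors_linear:
  "(x, v) \<in> F\<^sup>* \<Longrightarrow> (y, v) \<in> F\<^sup>* \<Longrightarrow> (x, y) \<in> F\<^sup>* \<or> (y, x) \<in> F\<^sup>*"
proof (induction arbitrary: y rule: rtrancl_induct)
  case (step b c)
  from step.prems show ?case
  proof (cases rule: rtranclE)
    case (step b')
    then have "b' = b"
      using unique_parent \<open>(b, c) \<in> F\<close> by (auto simp: Uniq_def)
    then show ?thesis using step.IH step by auto
  qed (use step.hyps in auto)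
qed simp

lemma root_unique:
  assumes "r \<in> roots n F" "r' \<in> roots n F" "(r, v) \<in> F\<^sup>*" "(r', v) \<in> F\<^sup>*"
  shows "r = r'"
  using ancestors_linear[OF assms(3,4)] assms(1,2)
  by (auto simp: roots_def elim: rtranclE)

lemma descendants_linear:
  assumes "unary_subtree F v"
  shows "(v, y) \<in> F\<^sup>* \<Longrightarrow> (v, x) \<in> F\<^sup>* \<Longrightarrow> (x, y) \<in> F\<^sup>* \<or> (y, x) \<in> F\<^sup>*"
proof (induction rule: rtrancl_induct)
  case (step b c)
  from step.IH[OF step.prems] show ?case
  proof
    assume "(b, x) \<in> F\<^sup>*"
    then show ?thesis
    proof (cases rule: converse_rtranclE)
      case (step b')
      then have "b' = c"
        using assms \<open>(v, b) \<in> F\<^sup>*\<close> \<open>(b, c) \<in> F\<close> by (auto simp: unary_subtree_def Uniq_def)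
      then show ?thesis using step by auto
    qed (use step.hyps in auto)
  qed (use step.hyps in auto)
qed simp

lemma succ_in_unary_subtree:
  assumes "unary_subtree F v" and succ: "succ_in A (F\<^sup>* `` {v}) x y"
  shows "(x, y) \<in> F"
proof -
  have "(v, x) \<in> F\<^sup>*" "(v, y) \<in> F\<^sup>*" "A x < A y"
    using succ by (auto simp: succ_in_def)
  then have "(x, y) \<in> F\<^sup>*"
    using descendants_linear[OF assms(1)] rtrancl_eq_or_less[of y x] by force
  then show ?thesis
  proof (cases rule: converse_rtranclE)
    case (step c)
    then have "c = y"
      using succ rtrancl_eq_or_less[of c y] arc_increasing[of x c] \<open>(v, x) \<in> F\<^sup>*\<close>
      by (auto simp: succ_in_def intro: rtrancl_into_rtrancl)
    then show ?thesis using step by simp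
  qed (use \<open>A x < A y\<close> in simp)
qed

context
  assumes inj: "inj_on A {1..n}"
begin

lemma subtree_list_basics:
  assumes "v \<in> {1..n}"
  shows "set (subtree_list A F v) = F\<^sup>* `` {v}" "ascending A (subtree_list A F v)"
    "subtree_list A F v \<noteq> []" "hd (subtree_list A F v) = v"
proof -
  have fin: "finite (F\<^sup>* `` {v})"
    using subtree_subset[OF assms] finite_subset by blast
  show set: "set (subtree_list A F v) = F\<^sup>* `` {v}"
    using fin by (simp add: subtree_list_def)
  show asc: "ascending A (subtree_list A F v)"
    unfolding subtree_list_def
    by (rule ascending_sort_key) (use fin subtree_subset[OF assms] inj_on_subset[OF inj] in auto)
  show "subtree_list A F v \<noteq> []"
    using set by auto
  show "hd (subtree_list A F v) = v"
    using set by (intro ascending_hd_eq[OF asc]) (auto dest: rtrancl_eq_or_less)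
qed

lemma path_arcs_subtree_list:
  "v \<in> {1..n} \<Longrightarrow> unary_subtree F v \<Longrightarrow> path_arcs (subtree_list A F v) \<subseteq> F"
  using path_arcs_ascending_iff[OF subtree_list_basics(2)] subtree_list_basics(1) succ_in_unary_subtree
  by fastforce

lemma traverses_subtree_list:
  assumes "v \<in> {1..n}" "unary_subtree F v"
  shows "traverses (first_out n F A UNIV) (subtree_list A F v)"
proof (rule traverses_first_out[OF inj subtree_list_basics(3,2)[OF assms(1)]])
  show "path_arcs (subtree_list A F v) \<subseteq> F"
    using path_arcs_subtree_list[OF assms] .
  show "w \<in> set (subtree_list A F v) \<and> A x < A w"
    if "x \<in> set (subtree_list A F v)" "(x, w) \<in> F" for x w
    using that subtree_list_basics(1)[OF assms(1)] arc_increasing by (auto intro: rtrancl_into_rtrancl)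
qed (use subtree_list_basics(1)[OF assms(1)] subtree_subset[OF assms(1)] in auto)

end

lemma sibling_not_reachable:
  assumes "(r, x) \<in> F" "(r, y) \<in> F" "x \<noteq> y"
  shows "(x, y) \<notin> F\<^sup>*"
proof
  assume "(x, y) \<in> F\<^sup>*"
  then show False
  proof (cases rule: rtranclE)
    case (step c)
    then have "c = r"
      using unique_parent assms(2) by (auto simp: Uniq_def)
    then have "(x, r) \<in> F\<^sup>*" using step by simp
    then show False
      using rtrancl_eq_or_less arc_increasing[OF assms(1)] by fastforce
  qed (use assms in simp)
qed

context
  fixes r a b :: nat
  assumes inj: "inj_on A {1..n}"
    and children: "{w. (r, w) \<in> F} = {a, b}" "a \<noteq> b"
    and unary: "unary_subtree F a" "unary_subtree F b"
begin

lemma children_arcs: "(r, a) \<in> F" "(r, b) \<in> F"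
  using children by blast+

lemma subtrees_of_children_disjoint: "F\<^sup>* `` {a} \<inter> F\<^sup>* `` {b} = {}"
proof (rule ccontr)
  assume "F\<^sup>* `` {a} \<inter> F\<^sup>* `` {b} \<noteq> {}"
  then obtain v where "(a, v) \<in> F\<^sup>*" "(b, v) \<in> F\<^sup>*" by blast
  then have "(a, b) \<in> F\<^sup>* \<or> (b, a) \<in> F\<^sup>*"
    by (rule ancestors_linear)
  then show False
    using sibling_not_reachable[OF children_arcs(1,2)] sibling_not_reachable[OF children_arcs(2,1)]
      children(2) by blast
qed

lemma subtree_of_parent: "F\<^sup>* `` {r} = insert r (F\<^sup>* `` {a} \<union> F\<^sup>* `` {b})"
proof (intro equalityI subsetI)
  fix v assume "v \<in> F\<^sup>* `` {r}"
  then have "(r, v) \<in> F\<^sup>*" by simp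
  then show "v \<in> insert r (F\<^sup>* `` {a} \<union> F\<^sup>* `` {b})"
    by (cases rule: converse_rtranclE) (use children in auto)
next
  fix v assume "v \<in> insert r (F\<^sup>* `` {a} \<union> F\<^sup>* `` {b})"
  then show "v \<in> F\<^sup>* `` {r}"
    using children_arcs by (auto intro: converse_rtrancl_into_rtrancl)
qed

lemma succ_of_parent_is_child:
  assumes succ: "succ_in A (F\<^sup>* `` {r}) r y"
  shows "(r, y) \<in> F"
proof -
  have y_child: "y = c" if "c \<in> {a, b}" "y \<in> F\<^sup>* `` {c}" for c
  proof -
    have "(r, c) \<in> F" "(c, y) \<in> F\<^sup>*"
      using that children by auto
    then have "A c \<le> A y" "\<not> A c < A y" "c \<in> {1..n}" "y \<in> {1..n}"
      using succ rtrancl_eq_or_less arc_increasing[of r c]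
      by (auto simp: succ_in_def intro: converse_rtrancl_into_rtrancl)
    then show "y = c"
      using inj by (auto dest: inj_onD)
  qed
  have "y \<noteq> r"
    using succ by (auto simp: succ_in_def)
  then have "y = a \<or> y = b"
    using succ subtree_of_parent y_child by (auto simp: succ_in_def)
  then show ?thesis
    using children_arcs by auto
qed

lemma zipm_children_bridges:
  "bridges A (F\<^sup>* `` {a}) (F\<^sup>* `` {b})
     (zipm (2 * n + 2) A (first_out n F A UNIV) (first_out n F A UNIV) (Some a) (Some b))"
proof -
  have V: "a \<in> {1..n}" "b \<in> {1..n}"
    using arc_increasing children_arcs by auto
  note la = subtree_list_basics[OF inj V(1)] and lb = subtree_list_basics[OF inj V(2)]
  have "length (subtree_list A F a) \<le> n" "length (subtree_list A F b) \<le> n"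
    using length_le_if_distinct_subset ascending_distinct la lb subtree_subset V by metis+
  moreover have "inj_on A (F\<^sup>* `` {a} \<union> F\<^sup>* `` {b})"
    by (rule inj_on_subset[OF inj]) (use subtree_subset V in auto)
  ultimately have "bridges A (set (subtree_list A F a)) (set (subtree_list A F b))
     (zipm (2 * n + 2) A (first_out n F A UNIV) (first_out n F A UNIV)
       (Some (hd (subtree_list A F a))) (Some (hd (subtree_list A F b))))"
    using la lb subtrees_of_children_disjoint subtree_subset V
      traverses_subtree_list[OF inj V(1) unary(1)] traverses_subtree_list[OF inj V(2) unary(2)]
    by (intro zipm_bridges) auto
  then show ?thesis
    using la lb by simp
qed

end

end

text \<open>These are the properties of a DFS forest of the reach-one graph: every index has at
  most two neighbours on the cycle, one of which is the parent unless the index is a root.\<close>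

locale root_branching_forest = increasing_forest +
  assumes inj: "inj_on A {1..n}"
    and child_unary: "(u, v) \<in> F \<Longrightarrow> \<exists>\<^sub>\<le>\<^sub>1c. (v, c) \<in> F"
    and root_binary: "r \<in> roots n F \<Longrightarrow>
      (\<exists>\<^sub>\<le>\<^sub>1c. (r, c) \<in> F) \<or> (\<exists>a b. a \<noteq> b \<and> {w. (r, w) \<in> F} = {a, b})"
begin

lemma unary_subtree_child:
  assumes "(u, v) \<in> F"
  shows "unary_subtree F v"
  unfolding unary_subtree_def
proof
  fix w assume "w \<in> F\<^sup>* `` {v}"
  then have "\<exists>p. (p, w) \<in> F"
    using assms by (auto elim: rtranclE)
  then show "\<exists>\<^sub>\<le>\<^sub>1c. (w, c) \<in> F"
    using child_unary by blast
qed

lemma zipm_children_subset_merge_subtrees: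
  "r \<in> roots n F \<Longrightarrow> {w. (r, w) \<in> F} = {a, b} \<Longrightarrow> a \<noteq> b \<Longrightarrow>
    zipm (2 * n + 2) A (first_out n F A UNIV) (first_out n F A UNIV) (Some a) (Some b)
      \<subseteq> merge_subtrees n A F"
  unfolding merge_subtrees_def by blast

lemma succ_in_two_children:
  assumes r: "r \<in> roots n F" and children: "{w. (r, w) \<in> F} = {a, b}" "a \<noteq> b"
    and succ: "succ_in A (F\<^sup>* `` {r}) x y" and x: "x \<in> insert r (F\<^sup>* `` {a})"
  shows "(x, y) \<in> merge_subtrees n A F"
proof -
  have ab: "(r, a) \<in> F" "(r, b) \<in> F"
    using children by blast+
  have unary: "unary_subtree F a" "unary_subtree F b"
    using unary_subtree_child ab by blast+
  note sub = subtree_of_parent[OF inj children unary]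
  define Z where
    "Z = zipm (2 * n + 2) A (first_out n F A UNIV) (first_out n F A UNIV) (Some a) (Some b)"
  have in_F: "(x, y) \<in> F"
    if "x = r \<or> y \<in> F\<^sup>* `` {a}"
  proof (cases "x = r")
    case True
    then show ?thesis
      using succ_of_parent_is_child[OF inj children unary] succ by simp
  next
    case False
    then have "succ_in A (F\<^sup>* `` {a}) x y"
      using succ_in_subset[OF succ] that x sub by auto
    then show ?thesis
      by (rule succ_in_unary_subtree[OF unary(1)])
  qed
  have in_Z: "(x, y) \<in> Z"
    if "x \<in> F\<^sup>* `` {a}" "y \<in> F\<^sup>* `` {b}"
  proof -
    have "succ_in A (F\<^sup>* `` {a} \<union> F\<^sup>* `` {b}) x y"
      using succ_in_subset[OF succ] that sub by blast
    then show ?thesis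
      using zipm_children_bridges[OF inj children unary] that unfolding bridges_def Z_def by blast
  qed
  have "y \<noteq> r"
    using succ rtrancl_eq_or_less[of r x] by (auto simp: succ_in_def)
  then have "y \<in> F\<^sup>* `` {a} \<union> F\<^sup>* `` {b}"
    using succ sub by (auto simp: succ_in_def)
  then consider "x = r \<or> y \<in> F\<^sup>* `` {a}" | "x \<in> F\<^sup>* `` {a}" "y \<in> F\<^sup>* `` {b}"
    using x by blast
  then show ?thesis
  proof cases
    case 1
    then show ?thesis using in_F unfolding merge_subtrees_def by blast
  next
    case 2
    then show ?thesis using in_Z zipm_children_subset_merge_subtrees[OF r children] Z_def by blast
  qed
qed

lemma succ_in_root_subtree:
  assumes r: "r \<in> roots n F" and succ: "succ_in A (F\<^sup>* `` {r}) x y"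
  shows "(x, y) \<in> merge_subtrees n A F"
  using root_binary[OF r]
proof
  assume "\<exists>\<^sub>\<le>\<^sub>1c. (r, c) \<in> F"
  then have "unary_subtree F r"
    using child_unary by (auto simp: unary_subtree_def elim: converse_rtranclE rtranclE)
  then have "(x, y) \<in> F"
    using succ by (rule succ_in_unary_subtree)
  then show ?thesis
    unfolding merge_subtrees_def by blast
next
  assume "\<exists>a b. a \<noteq> b \<and> {w. (r, w) \<in> F} = {a, b}"
  then obtain a b where children: "{w. (r, w) \<in> F} = {a, b}" "a \<noteq> b"
    by blast
  then have "unary_subtree F a" "unary_subtree F b"
    using unary_subtree_child by blast+
  then have "x \<in> insert r (F\<^sup>* `` {a}) \<or> x \<in> insert r (F\<^sup>* `` {b})"
    using subtree_of_parent[OF inj children] succ by (auto simp: succ_in_def)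
  moreover have "{w. (r, w) \<in> F} = {b, a}"
    using children by auto
  ultimately show ?thesis
    using succ_in_two_children[OF r children succ] succ_in_two_children[OF r _ _ succ] children(2)
    by blast
qed

lemma merge_subtrees_within_subtree:
  assumes "(u, w) \<in> merge_subtrees n A F"
  shows "\<exists>r\<in>roots n F. u \<in> F\<^sup>* `` {r} \<and> w \<in> F\<^sup>* `` {r} \<and> A u < A w"
proof (cases "(u, w) \<in> F")
  case True
  then obtain r where "r \<in> roots n F" "(r, u) \<in> F\<^sup>*"
    using reachable_from_root arc_increasing by blast
  then show ?thesis
    using True arc_increasing by (auto intro: rtrancl_into_rtrancl)
next
  case False
  then obtain r a b where r: "r \<in> roots n F" and children: "{w. (r, w) \<in> F} = {a, b}" "a \<noteq> b"
    and uw: "(u, w) \<in> zipm (2 * n + 2) A (first_out n F A UNIV) (first_out n F A UNIV) (Some a) (Some b)"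
    using assms unfolding merge_subtrees_def by blast
  have unary: "unary_subtree F a" "unary_subtree F b"
    using unary_subtree_child children by blast+
  show ?thesis
    using uw zipm_children_bridges[OF inj children unary] subtree_of_parent[OF inj children unary] r
    unfolding bridges_def by blast
qed

context
  fixes R0 :: "nat list"
  assumes R0: "distinct R0" "set R0 = roots n F"
begin

lemma root_in_range: "r \<in> set R0 \<Longrightarrow> r \<in> {1..n}"
  using R0(2) by (simp add: roots_def)

lemma map_hd_subtree_lists: "map hd (map (subtree_list A F) R0) = R0"
  using subtree_list_basics(4)[OF inj root_in_range] by (induction R0) auto

lemma subtree_lists_block_partition: "block_partition n A (map (subtree_list A F) R0)"
  unfolding block_partition_def
proof (intro conjI)
  note sl = subtree_list_basics[OF inj root_in_range]
  show "\<forall>L\<in>set (map (subtree_list A F) R0). L \<noteq> [] \<and> ascending A L"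
    using sl by auto
  have "inj_on (subtree_list A F) (set R0)"
    by (rule inj_on_inverseI[of _ hd]) (use sl in simp)
  then show "distinct (concat (map (subtree_list A F) R0))"
  proof (intro distinct_concat)
    fix ys zs assume "ys \<in> set (map (subtree_list A F) R0)" "zs \<in> set (map (subtree_list A F) R0)" "ys \<noteq> zs"
    then obtain r r' where r: "r \<in> set R0" "r' \<in> set R0" "r \<noteq> r'"
      and ys: "ys = subtree_list A F r" and zs: "zs = subtree_list A F r'"
      by auto
    show "set ys \<inter> set zs = {}"
    proof (rule ccontr)
      assume "set ys \<inter> set zs \<noteq> {}"
      then obtain v where "(r, v) \<in> F\<^sup>*" "(r', v) \<in> F\<^sup>*"
        using sl(1)[OF r(1)] sl(1)[OF r(2)] ys zs by auto
      then show False
        using root_unique r R0(2) by blast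
    qed
  next
    show "distinct ys" if "ys \<in> set (map (subtree_list A F) R0)" for ys
      using that sl(2) ascending_distinct by auto
  qed (use R0(1) in \<open>simp add: distinct_map\<close>)
  show "set (concat (map (subtree_list A F) R0)) = {1..n}"
  proof
    show "set (concat (map (subtree_list A F) R0)) \<subseteq> {1..n}"
      using sl(1) subtree_subset[OF root_in_range] by auto
    show "{1..n} \<subseteq> set (concat (map (subtree_list A F) R0))"
    proof
      fix v assume "v \<in> {1..n}"
      then obtain r where "r \<in> roots n F" "(r, v) \<in> F\<^sup>*"
        using reachable_from_root by blast
      then show "v \<in> set (concat (map (subtree_list A F) R0))"
        using sl(1) R0(2) by auto
    qed
  qed
qed

lemma merge_subtrees_block_graph: "block_graph A (map (subtree_list A F) R0) (merge_subtrees n A F)"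
  unfolding block_graph_def
proof
  note sl = subtree_list_basics[OF inj root_in_range]
  show "chain_arcs (map (subtree_list A F) R0) \<subseteq> merge_subtrees n A F"
  proof
    fix xy assume "xy \<in> chain_arcs (map (subtree_list A F) R0)"
    moreover obtain x y where "xy = (x, y)"
      by fastforce
    ultimately obtain r where r: "r \<in> set R0" and xy: "xy = (x, y)" "(x, y) \<in> path_arcs (subtree_list A F r)"
      by (auto simp: chain_arcs_def)
    then have "succ_in A (F\<^sup>* `` {r}) x y"
      using path_arcs_ascending_iff[OF sl(2)[OF r]] sl(1)[OF r] by simp
    then show "xy \<in> merge_subtrees n A F"
      using succ_in_root_subtree r R0(2) xy by simp
  qed
  show "merge_subtrees n A F \<subseteq> block_order A (map (subtree_list A F) R0)"
  proof
    fix uw assume "uw \<in> merge_subtrees n A F"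
    then obtain u w r where "uw = (u, w)" "r \<in> set R0" "u \<in> F\<^sup>* `` {r}" "w \<in> F\<^sup>* `` {r}" "A u < A w"
      using merge_subtrees_within_subtree R0(2) by (metis surj_pair)
    then show "uw \<in> block_order A (map (subtree_list A F) R0)"
      using sl(1) by (auto simp: block_order_def)
  qed
qed

end

end

section \<open>The reach-one graph\<close>

lemma inj_on_mod_interval: "inj_on (\<lambda>x::nat. x mod n) {m..<m + n}"
proof -
  have le_case: "a = b" if "a \<le> b" "a \<in> {m..<m + n}" "b \<in> {m..<m + n}" "a mod n = b mod n" for a b
  proof -
    have "n dvd b - a"
      using mod_eq_dvd_iff_nat[OF that(1), of n] that(4)[symmetric] by blast
    have "b - a < n"
      using that(1-3) by (simp add: less_diff_conv2)
    show "a = b"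
    proof (rule ccontr)
      assume "a \<noteq> b"
      then have "n \<le> b - a"
        using dvd_imp_le[OF \<open>n dvd b - a\<close>] that(1) by simp
      then show False
        using \<open>b - a < n\<close> by simp
    qed
  qed
  show ?thesis
  proof (rule inj_onI)
    fix a b assume "a \<in> {m..<m + n}" "b \<in> {m..<m + n}" "a mod n = b mod n"
    then show "a = b"
      using le_case[of a b] le_case[of b a] by (cases "a \<le> b") simp_all
  qed
qed

definition cycle_neighbours :: "nat \<Rightarrow> nat \<Rightarrow> nat set" where
  "cycle_neighbours n v = {w \<in> {1..n}. w mod n = Suc v mod n \<or> v mod n = Suc w mod n}"

lemma corr_graph_reach_one_neighbours:
  assumes "(u, w) \<in> corr_graph n 1 A"
  shows "w \<in> cycle_neighbours n u \<and> u \<in> cycle_neighbours n w"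
proof -
  have "u \<in> {1..n}" "w \<in> {1..n}" "w mod n = Suc u mod n \<or> u mod n = Suc w mod n"
    using assms unfolding corr_graph_def by auto
  then show ?thesis
    unfolding cycle_neighbours_def by blast
qed

lemma card_cycle_neighbours: "card (cycle_neighbours n v) \<le> 2"
proof -
  have fiber: "card {w \<in> {1..n}. f w = c} \<le> 1" if "inj_on f {1..n}" for f :: "nat \<Rightarrow> nat" and c
  proof -
    have "finite {w \<in> {1..n}. f w = c}"
      by simp
    moreover have "\<forall>x\<in>{w \<in> {1..n}. f w = c}. \<forall>y\<in>{w \<in> {1..n}. f w = c}. x = y"
      using inj_onD[OF that] by blast
    ultimately have "card {w \<in> {1..n}. f w = c} \<le> Suc 0"
      by (rule card_le_Suc0_iff_eq[THEN iffD2])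
    then show ?thesis
      by simp
  qed
  have "inj_on (\<lambda>w. w mod n) {1..n}"
    using inj_on_mod_interval[of n 1] by (simp add: atLeastLessThanSuc_atLeastAtMost)
  moreover have "inj_on (\<lambda>w. Suc w mod n) {1..n}"
  proof (rule inj_onI)
    fix a b assume "a \<in> {1..n}" "b \<in> {1..n}" "Suc a mod n = Suc b mod n"
    then have "Suc a = Suc b"
      using inj_onD[OF inj_on_mod_interval[of n 2], of "Suc a" "Suc b"] by simp
    then show "a = b" by simp
  qed
  ultimately have "card {w \<in> {1..n}. w mod n = Suc v mod n} \<le> 1"
      "card {w \<in> {1..n}. Suc w mod n = v mod n} \<le> 1"
    using fiber by blast+
  moreover have "cycle_neighbours n v =
      {w \<in> {1..n}. w mod n = Suc v mod n} \<union> {w \<in> {1..n}. Suc w mod n = v mod n}"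
    by (auto simp: cycle_neighbours_def)
  ultimately show ?thesis
    using card_Un_le[of "{w \<in> {1..n}. w mod n = Suc v mod n}" "{w \<in> {1..n}. Suc w mod n = v mod n}"]
    by simp
qed

lemma corr_graph_reach_one_child_unique:
  assumes F: "F \<subseteq> corr_graph n 1 A" and "(u, v) \<in> F"
  shows "\<exists>\<^sub>\<le>\<^sub>1c. (v, c) \<in> F"
proof (rule Uniq_I, rule ccontr)
  fix c c' assume c: "(v, c) \<in> F" "(v, c') \<in> F" "c \<noteq> c'"
  have "A u < A v" "A v < A c" "A v < A c'"
    using F assms(2) c unfolding corr_graph_def by blast+
  then have "u \<noteq> c" "u \<noteq> c'"
    by auto
  then have "card {u, c, c'} = 3"
    using c(3) by simp
  moreover have "{u, c, c'} \<subseteq> cycle_neighbours n v"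
    using F assms(2) c corr_graph_reach_one_neighbours by blast
  then have "card {u, c, c'} \<le> card (cycle_neighbours n v)"
    by (rule card_mono[rotated]) (simp add: cycle_neighbours_def)
  ultimately show False
    using card_cycle_neighbours[of n v] by simp
qed

lemma corr_graph_reach_one_children:
  assumes F: "F \<subseteq> corr_graph n 1 A"
  shows "(\<exists>\<^sub>\<le>\<^sub>1c. (r, c) \<in> F) \<or> (\<exists>a b. a \<noteq> b \<and> {w. (r, w) \<in> F} = {a, b})"
proof -
  have sub: "{w. (r, w) \<in> F} \<subseteq> cycle_neighbours n r"
    using F corr_graph_reach_one_neighbours by blast
  have fin: "finite (cycle_neighbours n r)"
    by (simp add: cycle_neighbours_def)
  have finite: "finite {w. (r, w) \<in> F}"
    by (rule finite_subset[OF sub fin])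
  have "card {w. (r, w) \<in> F} \<le> 2"
    using card_mono[OF fin sub] card_cycle_neighbours[of n r] by linarith
  then consider "card {w. (r, w) \<in> F} \<le> Suc 0" | "card {w. (r, w) \<in> F} = 2"
    by linarith
  then show ?thesis
  proof cases
    case 1
    then show ?thesis
      using card_le_Suc0_iff_eq[OF finite] by (auto simp: Uniq_def)
  next
    case 2
    then show ?thesis
      by (auto simp: card_2_iff)
  qed
qed

lemma root_branching_forest_dfs_forest:
  assumes "inj_on A {1..n}"
  shows "root_branching_forest n A (dfs_forest n (corr_graph n 1 A) A vl)"
proof (unfold_locales)
  let ?F = "dfs_forest n (corr_graph n 1 A) A vl"
  have F: "?F \<subseteq> corr_graph n 1 A"
    by (rule dfs_forest_subset)
  show "u \<in> {1..n} \<and> w \<in> {1..n} \<and> A u < A w" if "(u, w) \<in> ?F" for u w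
    using that F by (auto simp: corr_graph_def)
  show "\<exists>\<^sub>\<le>\<^sub>1u. (u, w) \<in> ?F" for w
    by (auto simp: dfs_forest_def Uniq_def)
  show "\<exists>\<^sub>\<le>\<^sub>1c. (v, c) \<in> ?F" if "(u, v) \<in> ?F" for u v
    using corr_graph_reach_one_child_unique[OF F that] .
  show "(\<exists>\<^sub>\<le>\<^sub>1c. (r, c) \<in> ?F) \<or> (\<exists>a b. a \<noteq> b \<and> {w. (r, w) \<in> ?F} = {a, b})" for r
    using corr_graph_reach_one_children[OF F] .
qed (rule assms)

theorem theorem11:
  fixes n :: nat and A :: "nat \<Rightarrow> real" and vl R0 :: "nat list" and F H' :: graph
  assumes "inj_on A {1..n}"
    and "distinct vl" and "set vl = {1..n}"
    and "F = dfs_forest n (corr_graph n 1 A) A vl"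
    and "H' = merge_subtrees n A F"
    and "distinct R0" and "set R0 = roots n F"
  shows "\<exists>i\<ge>1. is_ham_path_graph n (fst ((round_step n A ^^ i) (H', R0))) \<and>
           (\<forall>ord. is_topsort n (fst ((round_step n A ^^ i) (H', R0))) ord
                    \<longleftrightarrow> is_sorted_indices n A ord)"
proof -
  interpret root_branching_forest n A F
    using root_branching_forest_dfs_forest[OF assms(1)] assms(4) by simp
  define Ls where "Ls = map (subtree_list A F) R0"
  have part: "block_partition n A Ls" and graph: "block_graph A Ls H'" and R0: "map hd Ls = R0"
    using subtree_lists_block_partition merge_subtrees_block_graph map_hd_subtree_lists assms(5-7)
    by (simp_all add: Ls_def)
  define Ms where "Ms = (merge_pairs A ^^ Suc (length Ls)) Ls"
  have rounds: "(round_step n A ^^ Suc (length Ls)) (H', R0) = (chain_arcs Ms, map hd Ms)"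
    using funpow_round_step[OF assms(1) part graph] R0 by (simp add: Ms_def)
  have "length Ms \<le> 1"
    using length_funpow_merge_pairs[of "Suc (length Ls)" A Ls] by (simp add: Ms_def)
  then obtain L where "chain_arcs Ms = path_arcs L" "ascending A L" "set L = {1..n}"
    using single_block_path funpow_merge_pairs_block_partition[OF assms(1) part]
    unfolding Ms_def by blast
  then show ?thesis
    using rounds is_ham_path_graph_path_arcs[OF ascending_distinct] is_topsort_path_arcs_iff
    by (intro exI[of _ "Suc (length Ls)"]) auto
qed

end
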